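(* Consider the multiset combinatorial auction model described in the context. Fix any constant number $k\in\mathbb{N}$ of value queries (with $k\ll 2^m$). Compare two auctions, each of which outputs an allocation solving the winner determination problem (WDP) on the bidders' truthful reports: (A) each bidder is asked $k$ value queries for distinct bundles chosen uniformly at random from $\mathcal{X}$; (B) each bidder is asked a single demand query at a random price vector whose item prices are i.i.d. nonnegative random variables with a finite positive mean. Then the expected social welfare of auction (B) can be arbitrarily larger than that of auction (A): for every $K>0$ there exists an instance (items, capacities, bidders and value functions) for which the expected social welfare of the allocation of (B) is at least $K$ times the expected social welfare of the allocation of (A).
   Context: Multiset combinatorial auction: bidders $N=\{1,\dots,n\}$, items $M=\{1,\dots,m\}$ with capacities $c=(c_1,\dots,c_m)\in\mathbb{N}^m$. Bundles are vectors $x\in\mathcal{X}=\{0,\dots,c_1\}\times\cdots\times\{0,\dots,c_m\}$ ($x_j$ = number of copies of item $j$). Each bidder $i$ has a private value function $v_i:\mathcal{X}\to\mathbb{R}_{\ge0}$. An allocation $a=(a_1,\dots,a_n)\in\mathcal{X}^n$ is feasible if $\sum_{i}a_{ij}\le c_j$ for all $j$; $\mathcal{F}$ denotes the set of feasible allocations. The social welfare of $a$ is $V(a)=\sum_i v_i(a_i)$, and its efficiency is $V(a)/\max_{a'\in\mathcal{F}}V(a')$. A demand query with price vector $p\in\mathbb{R}^m_{\ge0}$ asks bidder $i$ to report a bundle $x_i^*(p)\in\arg\max_{x\in\mathcal{X}}\{v_i(x)-\langle p,x\rangle\}$. A value query for bundle $x$ asks bidder $i$ to report $v_i(x)$. Bidder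 $i$'s reports $R_i$ consist of her demand-query responses $R_i^{DQ}$ (pairs $(x,p)$) and value-query responses $R_i^{VQ}$ (pairs $(x,v_i(x))$). Her inferred value for $x$ is $\tilde v_i(x;R_i)=v_i(x)$ if $x$ appears in $R_i^{VQ}$, and otherwise $\max\left(\{\langle x,p\rangle:(x,p)\in R_i^{DQ}\}\cup\{0\}\right)$. The WDP selects $a^*(R)\in\arg\max_{a\in\mathcal{F}}\sum_{i\in N}\tilde v_i(a_i;R_i)$. *)

theory Defs
  imports "HOL-Probability.Probability"
begin

text \<open>A bundle is a function
  nat => nat, x j = number of copies of item j, with x j <= c j for j < m and
  x j = 0 for j >= m (so the bundle space X is finite).\<close>

definition bundles :: "nat \<Rightarrow> (nat \<Rightarrow> nat) \<Rightarrow> (nat \<Rightarrow> nat) set" where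
  "bundles m c = {x. (\<forall>j<m. x j \<le> c j) \<and> (\<forall>j. m \<le> j \<longrightarrow> x j = 0)}"

definition valuations :: "nat \<Rightarrow> nat \<Rightarrow> (nat \<Rightarrow> nat) \<Rightarrow> (nat \<Rightarrow> (nat \<Rightarrow> nat) \<Rightarrow> real) \<Rightarrow> bool" where
  "valuations n m c v = (\<forall>i<n. \<forall>x\<in>bundles m c. 0 \<le> v i x)"

definition feasible :: "nat \<Rightarrow> nat \<Rightarrow> (nat \<Rightarrow> nat) \<Rightarrow> (nat \<Rightarrow> nat \<Rightarrow> nat) \<Rightarrow> bool" where
  "feasible n m c a = ((\<forall>i<n. a i \<in> bundles m c) \<and> (\<forall>i. n \<le> i \<longrightarrow> a i = (\<lambda>_. 0))
      \<and> (\<forall>j<m. (\<Sum>i<n. a i j) \<le> c j))"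

definition welfare :: "nat \<Rightarrow> (nat \<Rightarrow> (nat \<Rightarrow> nat) \<Rightarrow> real) \<Rightarrow> (nat \<Rightarrow> nat \<Rightarrow> nat) \<Rightarrow> real" where
  "welfare n v a = (\<Sum>i<n. v i (a i))"

definition price_of :: "nat \<Rightarrow> (nat \<Rightarrow> nat) \<Rightarrow> (nat \<Rightarrow> real) \<Rightarrow> real" where
  "price_of m x p = (\<Sum>j<m. real (x j) * p j)"

text \<open>Inferred value from demand-query reports RDQ (pairs (x,p)) and
  value-query reports RVQ (pairs (x, v x)).\<close>
definition inferred_value :: "nat \<Rightarrow> ((nat \<Rightarrow> nat) \<times> (nat \<Rightarrow> real)) set
     \<Rightarrow> ((nat \<Rightarrow> nat) \<times> real) set \<Rightarrow> (nat \<Rightarrow> nat) \<Rightarrow> real" where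
  "inferred_value m RDQ RVQ x =
     (if x \<in> fst ` RVQ then (THE r. (x, r) \<in> RVQ)
      else Max ((\<lambda>q. price_of m (fst q) (snd q)) ` {q \<in> RDQ. fst q = x} \<union> {0}))"

definition vq_reports :: "((nat \<Rightarrow> nat) \<Rightarrow> real) \<Rightarrow> (nat \<Rightarrow> nat) set \<Rightarrow> ((nat \<Rightarrow> nat) \<times> real) set" where
  "vq_reports w Q = (\<lambda>x. (x, w x)) ` Q"

definition wdp_solution :: "nat \<Rightarrow> nat \<Rightarrow> (nat \<Rightarrow> nat) \<Rightarrow> (nat \<Rightarrow> (nat \<Rightarrow> nat) \<Rightarrow> real)
     \<Rightarrow> (nat \<Rightarrow> nat \<Rightarrow> nat) \<Rightarrow> bool" where
  "wdp_solution n m c vt a = (feasible n m c a \<and>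
     (\<forall>a'. feasible n m c a' \<longrightarrow> (\<Sum>i<n. vt i (a' i)) \<le> (\<Sum>i<n. vt i (a i))))"

definition demand_set :: "nat \<Rightarrow> (nat \<Rightarrow> nat) \<Rightarrow> ((nat \<Rightarrow> nat) \<Rightarrow> real) \<Rightarrow> (nat \<Rightarrow> real)
     \<Rightarrow> (nat \<Rightarrow> nat) set" where
  "demand_set m c w p = {x \<in> bundles m c.
     \<forall>y\<in>bundles m c. w y - price_of m y p \<le> w x - price_of m x p}"

text \<open>Auction (A): each bidder i < n independently gets a uniformly random
  k-element set of distinct bundles; the outcome space is the finite set of
  query profiles, with the uniform distribution.\<close>
definition query_profiles :: "nat \<Rightarrow> nat \<Rightarrow> (nat \<Rightarrow> nat) \<Rightarrow> nat \<Rightarrow> (nat \<Rightarrow> (nat \<Rightarrow> nat) set) set" where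
  "query_profiles n m c k = PiE {..<n} (\<lambda>_. {Q. Q \<subseteq> bundles m c \<and> card Q = k})"

definition expected_welfare_A :: "nat \<Rightarrow> nat \<Rightarrow> (nat \<Rightarrow> nat) \<Rightarrow> nat
     \<Rightarrow> (nat \<Rightarrow> (nat \<Rightarrow> nat) \<Rightarrow> real) \<Rightarrow> ((nat \<Rightarrow> (nat \<Rightarrow> nat) set) \<Rightarrow> (nat \<Rightarrow> nat \<Rightarrow> nat)) \<Rightarrow> real" where
  "expected_welfare_A n m c k v selA =
     (\<Sum>Q\<in>query_profiles n m c k. welfare n v (selA Q)) / real (card (query_profiles n m c k))"

definition price_dist :: "nat \<Rightarrow> real measure \<Rightarrow> (nat \<Rightarrow> real) measure" where
  "price_dist m D = PiM {..<m} (\<lambda>_. D)"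

end

theory Submission
  imports Defs
begin

text \<open>The hard instance has one bidder and one item with C copies; the bidder values one
  nonempty bundle a at V = 1 + t C and every other bundle at 1. By averaging, a can be chosen
  so that k random value queries hit it with probability at most k / C, so auction (A) earns at
  most 1 + (V - 1) k / C = 1 + t k in expectation. A price in (0, t) occurs with some
  probability \<delta> > 0 since the prices have positive mean; at such a price a is the unique
  demanded bundle and the only one with positive inferred value, so auction (B) earns at least
  V \<delta> > t C \<delta>. Taking C large yields any ratio K.\<close>

lemma positive_mean_imp_interval_emeasure_pos:
  fixes D :: "real measure"
  assumes "sets D = sets borel" and "0 < (\<integral>x. x \<partial>D)"
  shows "\<exists>t>0. 0 < emeasure D {0<..<t}"
proof (rule ccontr)
  assume "\<not> ?thesis"
  then have "{0<..<real (Suc n)} \<in> null_sets D" for n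
    using assms(1) by (simp add: null_sets_def)
  then have "(\<Union>n. {0<..<real (Suc n)}) \<in> null_sets D" by blast
  then have "AE x in D. x \<le> 0"
  proof (rule AE_I')
    show "{x \<in> space D. \<not> x \<le> 0} \<subseteq> (\<Union>n. {0<..<real (Suc n)})"
    proof
      fix x assume "x \<in> {x \<in> space D. \<not> x \<le> 0}"
      moreover obtain n where "x < real n"
        using reals_Archimedean2 by blast
      ultimately have "x \<in> {0<..<real (Suc n)}"
        by simp
      then show "x \<in> (\<Union>n. {0<..<real (Suc n)})"
        by blast
    qed
  qed
  then have "0 \<le> (\<integral>x. - x \<partial>D)" by (intro integral_nonneg_AE) auto
  with assms(2) show False by simp
qed

lemma ex_rarely_covered:
  fixes F :: "'b \<Rightarrow> 'a set"
  assumes "finite P" and "finite S" and "S \<noteq> {}"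
    and "\<And>Q. Q \<in> P \<Longrightarrow> card (S \<inter> F Q) \<le> k"
  shows "\<exists>a\<in>S. card {Q\<in>P. a \<in> F Q} * card S \<le> k * card P"
proof -
  define cover where "cover a = card {Q\<in>P. a \<in> F Q}" for a
  have "Min (cover ` S) \<in> cover ` S"
    using assms(2,3) by (intro Min_in) auto
  then obtain a where "a \<in> S" and a_min: "cover a = Min (cover ` S)"
    by (metis imageE)
  have "cover a \<le> cover b" if "b \<in> S" for b
    using a_min assms(2) that by simp
  then have "card S * cover a \<le> (\<Sum>b\<in>S. cover b)"
    using sum_bounded_below[of S "cover a" cover] by simp
  also have "\<dots> = (\<Sum>Q\<in>P. card {b\<in>S. b \<in> F Q})"
    unfolding cover_def by (rule sum_multicount_gen) (use assms(1,2) in auto)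
  also have "\<dots> \<le> (\<Sum>Q\<in>P. k)"
    using assms(4) by (intro sum_mono) (simp add: Int_def)
  finally show ?thesis
    using \<open>a \<in> S\<close> by (auto simp: cover_def mult.commute)
qed

lemma finite_bundles: "finite (bundles m c)"
proof (rule finite_subset)
  have "x j \<le> Max (c ` {..<m})" if "x \<in> bundles m c" and "j < m" for x j
  proof -
    have "x j \<le> c j"
      using that by (simp add: bundles_def)
    also have "c j \<le> Max (c ` {..<m})"
      using that(2) by (intro Max_ge) auto
    finally show ?thesis .
  qed
  then show "bundles m c \<subseteq>
      {x. \<forall>j. (j \<in> {..<m} \<longrightarrow> x j \<in> {..Max (c ` {..<m})}) \<and> (j \<notin> {..<m} \<longrightarrow> x j = 0)}"
    by (auto simp: bundles_def)
qed (rule finite_set_of_finite_funs; simp)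

lemma bundles_one_item: "bundles 1 c = (\<lambda>n j. if j = 0 then n else 0) ` {..c 0}"
  unfolding bundles_def by (auto simp: image_iff fun_eq_iff)

lemma card_bundles_one_item: "card (bundles 1 c) = Suc (c 0)"
proof -
  have "inj_on (\<lambda>n j. if j = 0 then n else (0::nat)) {..c 0}"
    by (auto simp: inj_on_def fun_eq_iff)
  then show ?thesis
    unfolding bundles_one_item by (subst card_image) simp_all
qed

lemma one_item_bundle_nonempty:
  assumes "a \<in> bundles 1 c" and "a \<noteq> (\<lambda>_. 0)"
  shows "1 \<le> a 0"
proof (rule ccontr)
  assume "\<not> 1 \<le> a 0"
  then have "a j = 0" for j
    using assms(1) by (cases j) (auto simp: bundles_def)
  with assms(2) show False by auto
qed

lemma finite_query_profiles: "finite (query_profiles n m c k)"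
  unfolding query_profiles_def by (rule finite_PiE) (use finite_bundles in auto)

lemma query_profiles_nonempty:
  assumes "k \<le> card (bundles m c)"
  shows "query_profiles n m c k \<noteq> {}"
proof -
  obtain Q where "Q \<subseteq> bundles m c" and "card Q = k"
    using obtain_subset_with_card_n[OF assms] by blast
  then have "(\<lambda>i\<in>{..<n}. Q) \<in> query_profiles n m c k"
    by (simp add: query_profiles_def)
  then show ?thesis by blast
qed

lemma ex_rarely_queried_bundle:
  assumes "0 < c 0"
  shows "\<exists>a\<in>bundles 1 c. 1 \<le> a 0 \<and>
    real (card {Q \<in> query_profiles 1 1 c k. a \<in> Q 0})
      \<le> real k / real (c 0) * real (card (query_profiles 1 1 c k))"
proof -
  define P where "P = query_profiles 1 1 c k"
  define S where "S = bundles 1 c - {\<lambda>_. 0}"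
  have "(\<lambda>_. 0) \<in> bundles 1 c" by (simp add: bundles_def)
  then have card_S: "card S = c 0"
    using card_bundles_one_item[of c] by (simp add: S_def finite_bundles)
  have "card (S \<inter> Q 0) \<le> k" if "Q \<in> P" for Q
  proof -
    have "Q 0 \<subseteq> bundles 1 c" and "card (Q 0) = k"
      using that by (auto simp: P_def query_profiles_def)
    then show ?thesis by (metis card_mono finite_bundles finite_subset inf_le2)
  qed
  moreover have "S \<noteq> {}"
    using card_S assms by auto
  ultimately obtain a where "a \<in> S" and a_rare: "card {Q\<in>P. a \<in> Q 0} * c 0 \<le> k * card P"
    using ex_rarely_covered[of P S "\<lambda>Q. Q 0" k] card_S
    by (auto simp: P_def finite_query_profiles S_def finite_bundles)
  have "real (card {Q\<in>P. a \<in> Q 0}) * real (c 0) \<le> real k * real (card P)"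
    using a_rare by (simp flip: of_nat_mult)
  then have "real (card {Q\<in>P. a \<in> Q 0}) \<le> real k / real (c 0) * real (card P)"
    using assms by (simp add: field_simps)
  moreover have "a \<in> bundles 1 c" and "1 \<le> a 0"
    using \<open>a \<in> S\<close> one_item_bundle_nonempty by (auto simp: S_def)
  ultimately show ?thesis by (auto simp: P_def)
qed

definition spike_valuation :: "(nat \<Rightarrow> nat) \<Rightarrow> real \<Rightarrow> (nat \<Rightarrow> nat) \<Rightarrow> real" where
  "spike_valuation a V x = (if x = a then V else 1)"

lemma inferred_value_vq_reports:
  "inferred_value m {} (vq_reports w Q) x = (if x \<in> Q then w x else 0)"
proof -
  have reported: "fst ` vq_reports w Q = Q"
    unfolding vq_reports_def by (simp add: image_image)
  show ?thesis
  proof (cases "x \<in> Q")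
    case True
    have "(THE r. (x, r) \<in> vq_reports w Q) = w x"
      by (rule the_equality) (auto simp: vq_reports_def True)
    then show ?thesis using True reported by (simp add: inferred_value_def)
  qed (simp add: inferred_value_def reported)
qed

lemma inferred_value_single_demand_report:
  "inferred_value m {(y, p)} {} x = (if x = y then max (price_of m y p) 0 else 0)"
proof -
  have "{q \<in> {(y, p)}. fst q = x} = (if x = y then {(y, p)} else {})" by auto
  then show ?thesis by (simp add: inferred_value_def max.commute)
qed

lemma wdp_solution_single_bidder:
  assumes "wdp_solution 1 m c vt s" and "q \<in> bundles m c"
  shows "vt 0 q \<le> vt 0 (s 0)"
proof -
  have "feasible 1 m c (\<lambda>i. if i = 0 then q else (\<lambda>_. 0))"
    using assms(2) by (auto simp: feasible_def bundles_def)
  then show ?thesis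
    using assms(1) unfolding wdp_solution_def by fastforce
qed

lemma value_query_wdp_selects_queried:
  assumes "wdp_solution 1 m c (\<lambda>i. inferred_value m {} (vq_reports w (Q i))) s"
    and "Q 0 \<subseteq> bundles m c" and "q \<in> Q 0" and "0 < w q"
  shows "s 0 \<in> Q 0"
  using wdp_solution_single_bidder[OF assms(1), of q] assms(2-4)
  by (auto simp: inferred_value_vq_reports split: if_splits)

lemma demand_query_wdp_selects_demanded:
  assumes "wdp_solution 1 m c (\<lambda>i. inferred_value m {(d i, p)} {}) s"
    and "d 0 \<in> bundles m c" and "0 < price_of m (d 0) p"
  shows "s 0 = d 0"
  using wdp_solution_single_bidder[OF assms(1,2)] assms(3)
  by (auto simp: inferred_value_single_demand_report split: if_splits)

lemma price_of_nonneg: "(\<And>j. j < m \<Longrightarrow> 0 \<le> p j) \<Longrightarrow> 0 \<le> price_of m x p"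
  unfolding price_of_def by (intro sum_nonneg) simp

lemma demand_set_spike:
  assumes "a \<in> bundles m c" and "\<And>j. j < m \<Longrightarrow> 0 \<le> p j" and "price_of m a p < V - 1"
    and "x \<in> demand_set m c (spike_valuation a V) p"
  shows "x = a"
proof (rule ccontr)
  assume "x \<noteq> a"
  then have "V - price_of m a p \<le> 1 - price_of m x p"
    using assms(1,4) by (auto simp: demand_set_def spike_valuation_def)
  moreover have "0 \<le> price_of m x p"
    by (rule price_of_nonneg) (rule assms(2))
  ultimately show False
    using assms(3) by linarith
qed

lemma nn_integral_price_dist_component:
  assumes "prob_space D" and "j < m" and "f \<in> borel_measurable D"
  shows "(\<integral>\<^sup>+ p. f (p j) \<partial>price_dist m D) = (\<integral>\<^sup>+ x. f x \<partial>D)"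
proof -
  have marginal: "distr (price_dist m D) D (\<lambda>p. p j) = D"
    unfolding price_dist_def by (rule distr_PiM_component) (use assms(1,2) in auto)
  have "(\<lambda>p. p j) \<in> measurable (price_dist m D) D"
    unfolding price_dist_def by (rule measurable_component_singleton) (use assms(2) in simp)
  then have "(\<integral>\<^sup>+ x. f x \<partial>distr (price_dist m D) D (\<lambda>p. p j)) = (\<integral>\<^sup>+ p. f (p j) \<partial>price_dist m D)"
    by (rule nn_integral_distr) (simp add: marginal assms(3))
  then show ?thesis by (simp add: marginal)
qed

lemma expected_welfare_A_spike:
  fixes V r :: real
  assumes "1 \<le> k" and "k \<le> card (bundles m c)" and "1 \<le> V"
    and wdp: "\<forall>Q\<in>query_profiles 1 m c k.
      wdp_solution 1 m c (\<lambda>i. inferred_value m {} (vq_reports (spike_valuation a V) (Q i))) (selA Q)"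
    and rare: "real (card {Q \<in> query_profiles 1 m c k. a \<in> Q 0})
      \<le> r * real (card (query_profiles 1 m c k))"
  shows "0 < expected_welfare_A 1 m c k (\<lambda>_. spike_valuation a V) selA"
    and "expected_welfare_A 1 m c k (\<lambda>_. spike_valuation a V) selA \<le> 1 + (V - 1) * r"
proof -
  define P where "P = query_profiles 1 m c k"
  define W where "W Q = welfare 1 (\<lambda>_. spike_valuation a V) (selA Q)" for Q
  have W_bounds: "1 \<le> W Q \<and> W Q \<le> 1 + (V - 1) * of_bool (a \<in> Q 0)" if "Q \<in> P" for Q
  proof -
    have Q0: "Q 0 \<subseteq> bundles m c" "card (Q 0) = k"
      using that by (auto simp: P_def query_profiles_def)
    then obtain q where "q \<in> Q 0"
      using assms(1) by fastforce
    moreover have "0 < spike_valuation a V q"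
      using assms(3) by (simp add: spike_valuation_def)
    moreover have "wdp_solution 1 m c
        (\<lambda>i. inferred_value m {} (vq_reports (spike_valuation a V) (Q i))) (selA Q)"
      using wdp that by (simp add: P_def)
    ultimately have "selA Q 0 \<in> Q 0"
      using value_query_wdp_selects_queried Q0(1) by blast
    then show ?thesis
      using assms(3) by (auto simp: W_def welfare_def spike_valuation_def)
  qed
  have "finite P" and "0 < card P"
    using finite_query_profiles query_profiles_nonempty[OF assms(2)]
    by (auto simp: P_def card_gt_0_iff)
  have "real (card P) * 1 \<le> sum W P"
    using W_bounds by (intro sum_bounded_below) blast
  with \<open>0 < card P\<close> show "0 < expected_welfare_A 1 m c k (\<lambda>_. spike_valuation a V) selA"
    by (simp add: expected_welfare_A_def P_def W_def)
  have "sum W P \<le> (\<Sum>Q\<in>P. 1 + (V - 1) * of_bool (a \<in> Q 0))"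
    using W_bounds by (intro sum_mono) blast
  also have "\<dots> = real (card P) + (V - 1) * real (card {Q\<in>P. a \<in> Q 0})"
    using \<open>finite P\<close> by (simp add: sum.distrib flip: sum_distrib_left) (simp add: Int_def)
  also have "\<dots> \<le> real (card P) + (V - 1) * (r * real (card P))"
    using rare[folded P_def] assms(3) by (simp add: mult_left_mono)
  finally have "sum W P \<le> (1 + (V - 1) * r) * real (card P)"
    by (simp add: algebra_simps)
  with \<open>0 < card P\<close>
  show "expected_welfare_A 1 m c k (\<lambda>_. spike_valuation a V) selA \<le> 1 + (V - 1) * r"
    by (simp add: expected_welfare_A_def P_def W_def pos_divide_le_eq)
qed

lemma expected_welfare_B_spike:
  fixes t V :: real
  assumes "prob_space D" and "sets D = sets borel"
    and "a \<in> bundles 1 c" and "1 \<le> a 0" and "real (a 0) * t \<le> V - 1"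
    and dq: "\<forall>p\<in>space (price_dist 1 D). dq p 0 \<in> demand_set 1 c (spike_valuation a V) p"
    and wdp: "\<forall>p\<in>space (price_dist 1 D).
      wdp_solution 1 1 c (\<lambda>i. inferred_value 1 {(dq p i, p)} {}) (selB p)"
  shows "ennreal V * emeasure D {0<..<t}
    \<le> (\<integral>\<^sup>+ p. ennreal (welfare 1 (\<lambda>_. spike_valuation a V) (selB p)) \<partial>price_dist 1 D)"
proof -
  have selB: "selB p 0 = a" if p: "p \<in> space (price_dist 1 D)" "p 0 \<in> {0<..<t}" for p
  proof -
    have price: "price_of 1 a p = real (a 0) * p 0"
      by (simp add: price_of_def)
    have "real (a 0) * p 0 < real (a 0) * t"
      using p(2) assms(4) by (intro mult_strict_left_mono) auto
    moreover have "0 < real (a 0) * p 0"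
      using p(2) assms(4) by simp
    ultimately have "0 < price_of 1 a p" and "price_of 1 a p < V - 1"
      using assms(5) unfolding price by linarith+
    moreover have "0 \<le> p j" if "j < 1" for j
      using that p(2) by simp
    ultimately have "dq p 0 = a"
      using demand_set_spike[OF assms(3) _ _ dq[rule_format, OF p(1)]] by blast
    then show ?thesis
      using demand_query_wdp_selects_demanded[OF wdp[rule_format, OF p(1)]] assms(3) \<open>0 < price_of 1 a p\<close>
      by simp
  qed
  have pointwise: "ennreal V * indicator {0<..<t} (p 0)
      \<le> ennreal (welfare 1 (\<lambda>_. spike_valuation a V) (selB p))"
    if "p \<in> space (price_dist 1 D)" for p
  proof (cases "p 0 \<in> {0<..<t}")
    case True
    then show ?thesis
      using selB[OF that True] by (simp add: welfare_def spike_valuation_def)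
  qed simp
  have "(\<lambda>x. ennreal V * indicator {0<..<t} x) \<in> borel_measurable borel"
    by simp
  then have indicator_measurable: "(\<lambda>x. ennreal V * indicator {0<..<t} x) \<in> borel_measurable D"
    by (simp only: measurable_cong_sets[OF assms(2) refl])
  have "ennreal V * emeasure D {0<..<t} = (\<integral>\<^sup>+ x. ennreal V * indicator {0<..<t} x \<partial>D)"
    using assms(2) by (simp add: nn_integral_cmult_indicator)
  also have "\<dots> = (\<integral>\<^sup>+ p. ennreal V * indicator {0<..<t} (p 0) \<partial>price_dist 1 D)"
    by (rule nn_integral_price_dist_component[OF assms(1) zero_less_one indicator_measurable, symmetric])
  also have "\<dots> \<le> (\<integral>\<^sup>+ p. ennreal (welfare 1 (\<lambda>_. spike_valuation a V) (selB p)) \<partial>price_dist 1 D)"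
    using pointwise by (rule nn_integral_mono)
  finally show ?thesis .
qed

lemma spike_auction_welfare_gap:
  fixes t V r K :: real
  assumes "prob_space D" and "sets D = sets borel"
    and "1 \<le> k" and "k \<le> card (bundles 1 c)" and "1 \<le> V"
    and "a \<in> bundles 1 c" and "1 \<le> a 0" and "real (a 0) * t \<le> V - 1"
    and rare: "real (card {Q \<in> query_profiles 1 1 c k. a \<in> Q 0})
      \<le> r * real (card (query_profiles 1 1 c k))"
    and "0 \<le> K" and gap: "K * (1 + (V - 1) * r) \<le> V * measure D {0<..<t}"
    and wdpA: "\<forall>Q\<in>query_profiles 1 1 c k.
      wdp_solution 1 1 c (\<lambda>i. inferred_value 1 {} (vq_reports (spike_valuation a V) (Q i))) (selA Q)"
    and dq: "\<forall>p\<in>space (price_dist 1 D). \<forall>i<1. dq p i \<in> demand_set 1 c (spike_valuation a V) p"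
    and wdpB: "\<forall>p\<in>space (price_dist 1 D).
      wdp_solution 1 1 c (\<lambda>i. inferred_value 1 {(dq p i, p)} {}) (selB p)"
  shows "0 < expected_welfare_A 1 1 c k (\<lambda>_. spike_valuation a V) selA
    \<and> ennreal (K * expected_welfare_A 1 1 c k (\<lambda>_. spike_valuation a V) selA)
      \<le> (\<integral>\<^sup>+ p. ennreal (welfare 1 (\<lambda>_. spike_valuation a V) (selB p)) \<partial>price_dist 1 D)"
    (is "0 < ?EA \<and> _ \<le> ?EB")
proof
  note A = expected_welfare_A_spike[OF assms(3-5) wdpA rare]
  show "0 < ?EA" by (fact A(1))
  have "K * ?EA \<le> K * (1 + (V - 1) * r)"
    using A(2) \<open>0 \<le> K\<close> by (rule mult_left_mono)
  also note gap
  finally have "ennreal (K * ?EA) \<le> ennreal (V * measure D {0<..<t})"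
    by (rule ennreal_leI)
  also have "\<dots> = ennreal V * emeasure D {0<..<t}"
    using \<open>1 \<le> V\<close> finite_measure.emeasure_eq_measure[OF prob_space.axioms(1)[OF assms(1)]]
    by (simp add: ennreal_mult)
  also have "\<dots> \<le> ?EB"
    using dq by (intro expected_welfare_B_spike[OF assms(1,2,6-8) _ wdpB]) auto
  finally show "ennreal (K * ?EA) \<le> ?EB" .
qed

theorem proposition3p1:
  fixes k :: nat and D :: "real measure" and K :: real
  assumes "1 \<le> k"
    and "prob_space D" and "sets D = sets borel"
    and "AE x in D. 0 \<le> x"
    and "integrable D (\<lambda>x. x)" and "0 < (\<integral>x. x \<partial>D)"
    and "0 < K"
  shows "\<exists>n m c v. valuations n m c v \<and> k \<le> card (bundles m c) \<and>
    (\<forall>selA dq selB.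
       (\<forall>Q\<in>query_profiles n m c k.
          wdp_solution n m c (\<lambda>i. inferred_value m {} (vq_reports (v i) (Q i))) (selA Q))
     \<and> (\<forall>p\<in>space (price_dist m D). \<forall>i<n. dq p i \<in> demand_set m c (v i) p)
     \<and> (\<forall>p\<in>space (price_dist m D).
          wdp_solution n m c (\<lambda>i. inferred_value m {(dq p i, p)} {}) (selB p))
     \<longrightarrow> 0 < expected_welfare_A n m c k v selA
       \<and> ennreal (K * expected_welfare_A n m c k v selA)
           \<le> (\<integral>\<^sup>+ p. ennreal (welfare n v (selB p)) \<partial>price_dist m D))"
proof -
  obtain t :: real where "0 < t" and "0 < emeasure D {0<..<t}"
    using positive_mean_imp_interval_emeasure_pos[OF assms(3,6)] by blast
  define \<delta> where "\<delta> = measure D {0<..<t}"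
  have "0 < \<delta>"
    using finite_measure.emeasure_eq_measure[OF prob_space.axioms(1)[OF assms(2)]]
      \<open>0 < emeasure D {0<..<t}\<close> by (simp add: \<delta>_def)
  obtain C0 :: nat where "K * (1 + t * k) / (t * \<delta>) \<le> real C0"
    using real_arch_simple by blast
  define C where "C = C0 + k"
  then have "k \<le> C" and "K * (1 + t * k) / (t * \<delta>) \<le> real C"
    using \<open>_ \<le> real C0\<close> by auto
  with \<open>0 < t\<close> \<open>0 < \<delta>\<close> have scale: "K * (1 + t * k) \<le> t * C * \<delta>"
    by (simp add: pos_divide_le_eq mult.commute mult.left_commute)
  define c :: "nat \<Rightarrow> nat" where "c = (\<lambda>_. C)"
  define V where "V = 1 + t * C"
  obtain a where a: "a \<in> bundles 1 c" "1 \<le> a 0"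
    and rare: "real (card {Q \<in> query_profiles 1 1 c k. a \<in> Q 0})
      \<le> real k / real C * real (card (query_profiles 1 1 c k))"
    using ex_rarely_queried_bundle[of c k] assms(1) \<open>k \<le> C\<close> by (auto simp: c_def)
  have "k \<le> card (bundles 1 c)"
    using card_bundles_one_item[of c] \<open>k \<le> C\<close> by (simp add: c_def)
  have "1 \<le> V"
    using \<open>0 < t\<close> by (simp add: V_def)
  have "real (a 0) * t \<le> V - 1"
    using a(1) \<open>0 < t\<close> by (simp add: V_def bundles_def c_def mult_right_mono)
  have "(V - 1) * (real k / real C) = t * k"
    using assms(1) \<open>k \<le> C\<close> by (simp add: V_def)
  with scale have gap: "K * (1 + (V - 1) * (real k / real C)) \<le> V * measure D {0<..<t}"
    using \<open>0 < \<delta>\<close> by (simp add: V_def \<delta>_def algebra_simps)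
  have "valuations 1 1 c (\<lambda>_. spike_valuation a V)"
    using \<open>1 \<le> V\<close> by (simp add: valuations_def spike_valuation_def)
  with \<open>k \<le> card (bundles 1 c)\<close>
    spike_auction_welfare_gap[OF assms(2,3,1) \<open>k \<le> card (bundles 1 c)\<close> \<open>1 \<le> V\<close> a
      \<open>real (a 0) * t \<le> V - 1\<close> rare less_imp_le[OF assms(7)] gap]
  show ?thesis by blast
qed

end
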